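(* Let $\bm\Sigma=I_p$, $\sigma>0$, $n,\tilde n\ge1$, $1\le s\le p$, $b_0\ne0$, and let $\bm b\in\mathbb{R}^p$ satisfy $b_k\in\{-b_0,0,b_0\}$ for all $k$ and $\|\bm b\|_0=s$. Fix $1\le j\le p$ with $b_j\neq0$. Define $$\eta_j^{(os)}=\frac{\sqrt n b_j}{\Omega_{j,j}^{1/2}\sigma},\qquad \eta_j^{(ts)}=\frac{\sqrt n b_j}{\sqrt{(\Omega_{j,j}\bm b^{\intercal}\bm\Sigma\bm b+b_j^2)(1+n/\tilde n)+\Omega_{j,j}\sigma^2}},$$ with $\bm\Omega=\bm\Sigma^{-1}$. Then $|\eta_j^{(os)}|=\sqrt n|b_0|/\sigma$ and $$|\eta_j^{(ts)}|\le\min\Big\{\sqrt{\frac{n\wedge\tilde n}{s}},\ \frac{\sqrt n|b_0|}{\sigma}\Big\}.$$ Consequently the one-sample and two-sample powers $\Phi(|\eta|-\tau_\alpha)+\Phi(-|\eta|-\tau_\alpha)$ (with $\eta=\eta_j^{(os)}$, resp. $\eta_j^{(ts)}$) are given by these values.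
   Context: $\Phi$ is the standard normal CDF, $\tau_\alpha$ the $\alpha$-quantile of the standard normal, $a\wedge b=\min\{a,b\}$. The quantities $\eta_j^{(os)},\eta_j^{(ts)}$ are the signal strengths (means of the asymptotic $\sqrt n$-scaled $z$-statistics) for testing $\beta_j=0$ with one-sample data and with proxy data, respectively, when the true coefficient is $\bm b$. *)

theory Defs
  imports "HOL-Analysis.Analysis" "HOL-Probability.Probability"
begin

definition Phi :: "real \<Rightarrow> real" where
  "Phi x = measure (density lborel std_normal_density) {..x}"

definition tau :: "real \<Rightarrow> real" where
  "tau \<alpha> = (THE t. Phi t = \<alpha>)"

definition power :: "real \<Rightarrow> real \<Rightarrow> real" where
  "power \<eta> \<alpha> = Phi (\<bar>\<eta>\<bar> - tau \<alpha>) + Phi (- \<bar>\<eta>\<bar> - tau \<alpha>)"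

definition eta_os :: "nat \<Rightarrow> real \<Rightarrow> real^'p^'p \<Rightarrow> real^'p \<Rightarrow> 'p \<Rightarrow> real" where
  "eta_os n \<sigma> \<Omega> b j = sqrt (real n) * b$j / (sqrt (\<Omega>$j$j) * \<sigma>)"

definition eta_ts :: "nat \<Rightarrow> nat \<Rightarrow> real \<Rightarrow> real^'p^'p \<Rightarrow> real^'p^'p \<Rightarrow> real^'p \<Rightarrow> 'p \<Rightarrow> real" where
  "eta_ts n nt \<sigma> \<Sigma> \<Omega> b j =
     sqrt (real n) * b$j /
     sqrt ((\<Omega>$j$j * (b \<bullet> (\<Sigma> *v b)) + (b$j)\<^sup>2) * (1 + real n / real nt) + \<Omega>$j$j * \<sigma>\<^sup>2)"

end

theory Submission
  imports Defs
begin

text \<open>With \<open>\<Sigma> = I\<close> also \<open>\<Omega> = I\<close>, and since \<open>b\<close> is \<open>{-b\<^sub>0, 0, b\<^sub>0}\<close>-valued with \<open>s\<close> nonzero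
  entries, \<open>b\<^sub>j\<^sup>2 = b\<^sub>0\<^sup>2\<close> and \<open>b \<bullet> \<Sigma> b = s b\<^sub>0\<^sup>2\<close>; this makes the one-sample signal explicit.
  Dropping everything from the denominator of the proxy-data signal except \<open>\<Omega>\<^sub>j\<^sub>j \<sigma>\<^sup>2\<close> bounds it
  by the one-sample signal, while keeping only \<open>\<Omega>\<^sub>j\<^sub>j (b \<bullet> \<Sigma> b) (1 + n/nt)\<close> bounds its square by
  \<open>n nt / (n + nt) \<cdot> b\<^sub>j\<^sup>2 / (\<Omega>\<^sub>j\<^sub>j (b \<bullet> \<Sigma> b))\<close>, and \<open>n nt / (n + nt) \<le> min n nt\<close>.\<close>

lemma matrix_inv_mat_1: "matrix_inv (mat 1 :: 'a::semiring_1^'n^'n) = mat 1"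
proof -
  have "\<exists>A'. (mat 1 :: 'a^'n^'n) ** A' = mat 1 \<and> A' ** mat 1 = mat 1"
    by (intro exI[of _ "mat 1"]) (simp add: matrix_mul_lid)
  then have "(mat 1 :: 'a^'n^'n) ** matrix_inv (mat 1) = mat 1"
    unfolding matrix_inv_def by (rule someI_ex[THEN conjunct1])
  then show ?thesis
    by (simp add: matrix_mul_lid)
qed

lemma sum_squares_three_valued:
  fixes f :: "'a \<Rightarrow> real"
  assumes "finite A" and "\<forall>k\<in>A. f k \<in> {-c, 0, c}"
  shows "(\<Sum>k\<in>A. (f k)\<^sup>2) = real (card {k\<in>A. f k \<noteq> 0}) * c\<^sup>2"
proof -
  have "(\<Sum>k\<in>A. (f k)\<^sup>2) = (\<Sum>k\<in>A. if f k \<noteq> 0 then c\<^sup>2 else 0)"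
    using assms(2) by (intro sum.cong) auto
  also have "\<dots> = real (card {k\<in>A. f k \<noteq> 0}) * c\<^sup>2"
    using assms(1) by (simp add: sum.If_cases Int_def)
  finally show ?thesis .
qed

lemma harmonic_le_min:
  fixes n m :: real
  assumes "n > 0" and "m > 0"
  shows "n / (1 + n / m) \<le> min n m"
proof -
  have "n / (1 + n / m) = n * m / (m + n)"
    using assms by (simp add: field_simps)
  also have "\<dots> \<le> min n m"
    using assms by (auto simp: field_simps min_def)
  finally show ?thesis .
qed

lemma abs_eta_ts_eq_sqrt:
  assumes "(\<Omega>$j$j * (b \<bullet> (\<Sigma> *v b)) + (b$j)\<^sup>2) * (1 + real n / real nt) + \<Omega>$j$j * \<sigma>\<^sup>2 \<ge> 0"
  shows "\<bar>eta_ts n nt \<sigma> \<Sigma> \<Omega> b j\<bar> = sqrt (real n * (b$j)\<^sup>2 /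
    ((\<Omega>$j$j * (b \<bullet> (\<Sigma> *v b)) + (b$j)\<^sup>2) * (1 + real n / real nt) + \<Omega>$j$j * \<sigma>\<^sup>2))"
  using assms by (simp add: eta_ts_def abs_mult real_sqrt_mult real_sqrt_divide)

lemma abs_eta_ts_le_abs_eta_os:
  assumes "\<Omega>$j$j > 0" and "\<sigma> > 0" and "b \<bullet> (\<Sigma> *v b) \<ge> 0"
  shows "\<bar>eta_ts n nt \<sigma> \<Sigma> \<Omega> b j\<bar> \<le> \<bar>eta_os n \<sigma> \<Omega> b j\<bar>"
proof -
  define D where "D = (\<Omega>$j$j * (b \<bullet> (\<Sigma> *v b)) + (b$j)\<^sup>2) * (1 + real n / real nt)"
  have "D \<ge> 0"
    unfolding D_def using assms by simp
  have "\<Omega>$j$j * \<sigma>\<^sup>2 > 0"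
    using assms by simp
  then have "real n * (b$j)\<^sup>2 / (D + \<Omega>$j$j * \<sigma>\<^sup>2) \<le> real n * (b$j)\<^sup>2 / (\<Omega>$j$j * \<sigma>\<^sup>2)"
    using \<open>D \<ge> 0\<close> by (intro divide_left_mono) auto
  moreover have "\<bar>eta_os n \<sigma> \<Omega> b j\<bar> = sqrt (real n * (b$j)\<^sup>2 / (\<Omega>$j$j * \<sigma>\<^sup>2))"
    using assms by (simp add: eta_os_def abs_mult real_sqrt_mult real_sqrt_divide)
  ultimately show ?thesis
    using abs_eta_ts_eq_sqrt[of \<Omega> j b \<Sigma> n nt \<sigma>] \<open>D \<ge> 0\<close> \<open>\<Omega>$j$j * \<sigma>\<^sup>2 > 0\<close>
    unfolding D_def by simp
qed

lemma abs_eta_ts_le_sqrt_min: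
  assumes "\<Omega>$j$j > 0" and "b \<bullet> (\<Sigma> *v b) > 0" and "n > 0" and "nt > 0"
  shows "\<bar>eta_ts n nt \<sigma> \<Sigma> \<Omega> b j\<bar>
    \<le> sqrt (real (min n nt) * (b$j)\<^sup>2 / (\<Omega>$j$j * (b \<bullet> (\<Sigma> *v b))))"
proof -
  define Q where "Q = \<Omega>$j$j * (b \<bullet> (\<Sigma> *v b))"
  define r where "r = 1 + real n / real nt"
  have "Q > 0" "r > 0"
    unfolding Q_def r_def using assms by (simp_all add: add_pos_nonneg)
  have "Q * r > 0"
    using \<open>Q > 0\<close> \<open>r > 0\<close> by simp
  moreover have "Q * r \<le> (Q + (b$j)\<^sup>2) * r + \<Omega>$j$j * \<sigma>\<^sup>2"
    using assms \<open>r > 0\<close> by (simp add: distrib_right)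
  ultimately have "real n * (b$j)\<^sup>2 / ((Q + (b$j)\<^sup>2) * r + \<Omega>$j$j * \<sigma>\<^sup>2) \<le> real n * (b$j)\<^sup>2 / (Q * r)"
    by (intro divide_left_mono) simp_all
  also have "\<dots> = real n / r * ((b$j)\<^sup>2 / Q)"
    by simp
  also have "\<dots> \<le> real (min n nt) * ((b$j)\<^sup>2 / Q)"
    using harmonic_le_min[of "real n" "real nt"] assms \<open>Q > 0\<close>
    unfolding r_def by (intro mult_right_mono) auto
  finally show ?thesis
    using abs_eta_ts_eq_sqrt[of \<Omega> j b \<Sigma> n nt \<sigma>] \<open>Q > 0\<close> \<open>r > 0\<close> assms(1)
    unfolding Q_def r_def by simp
qed

theorem corollary1:
  fixes \<Sigma> \<Omega> :: "real^'p^'p" and b :: "real^'p" and \<sigma> b0 \<alpha> :: real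
    and n nt s :: nat and j :: 'p
  assumes "\<Sigma> = mat 1" and "\<Omega> = matrix_inv \<Sigma>"
    and "\<sigma> > 0" and "n \<ge> 1" and "nt \<ge> 1"
    and "1 \<le> s" and "s \<le> CARD('p)"
    and "b0 \<noteq> 0"
    and "\<forall>k. b$k \<in> {-b0, 0, b0}"
    and "card {k. b$k \<noteq> 0} = s"
    and "b$j \<noteq> 0"
    and "0 < \<alpha>" and "\<alpha> < 1"
  shows "\<bar>eta_os n \<sigma> \<Omega> b j\<bar> = sqrt (real n) * \<bar>b0\<bar> / \<sigma>
    \<and> \<bar>eta_ts n nt \<sigma> \<Sigma> \<Omega> b j\<bar>
        \<le> min (sqrt (real (min n nt) / real s)) (sqrt (real n) * \<bar>b0\<bar> / \<sigma>)
    \<and> power (eta_os n \<sigma> \<Omega> b j) \<alpha>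
        = Phi (sqrt (real n) * \<bar>b0\<bar> / \<sigma> - tau \<alpha>) + Phi (- (sqrt (real n) * \<bar>b0\<bar> / \<sigma>) - tau \<alpha>)"
proof -
  have \<Omega>_jj: "\<Omega>$j$j = 1"
    using assms(1,2) by (simp add: matrix_inv_mat_1) (simp add: mat_def)
  have b_j: "(b$j)\<^sup>2 = b0\<^sup>2" "\<bar>b$j\<bar> = \<bar>b0\<bar>"
    using assms(9,11) by (metis empty_iff insert_iff power2_minus abs_minus_cancel)+
  have "b \<bullet> (\<Sigma> *v b) = (\<Sum>k\<in>UNIV. (b$k)\<^sup>2)"
    using assms(1) by (simp add: inner_vec_def power2_eq_square)
  also have "\<dots> = real s * b0\<^sup>2"
    using sum_squares_three_valued[of UNIV "\<lambda>k. b$k" b0] assms(9,10) by simp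
  finally have quad: "b \<bullet> (\<Sigma> *v b) = real s * b0\<^sup>2" .
  have os: "\<bar>eta_os n \<sigma> \<Omega> b j\<bar> = sqrt (real n) * \<bar>b0\<bar> / \<sigma>"
    using assms(3) b_j \<Omega>_jj by (simp add: eta_os_def abs_mult)
  have "\<bar>eta_ts n nt \<sigma> \<Sigma> \<Omega> b j\<bar> \<le> sqrt (real (min n nt) / real s)"
    using abs_eta_ts_le_sqrt_min[of \<Omega> j b \<Sigma> n nt \<sigma>] assms(4-6,8)
    by (simp add: \<Omega>_jj quad b_j)
  moreover have "\<bar>eta_ts n nt \<sigma> \<Sigma> \<Omega> b j\<bar> \<le> sqrt (real n) * \<bar>b0\<bar> / \<sigma>"
    using abs_eta_ts_le_abs_eta_os[of \<Omega> j \<sigma> b \<Sigma> n nt] assms(3) os by (simp add: \<Omega>_jj quad)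
  ultimately show ?thesis
    using os by (simp add: power_def)
qed

end
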